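(* Let $n\ge 2$. Let $\hat a_{i,i-1}>0$ and $\hat b_{i,i-1}\in\mathbb{R}$ for $2\le i\le n$, and for $1\le m\le k\le n$ put $\hat a_{k,m}:=\prod_{i=m+1}^{k}\hat a_{i,i-1}$ (so $\hat a_{k,k}=1$). Let $L_i\in\mathbb{R}$ ($2\le i\le n$) and $R_i\in\mathbb{R}$ ($1\le i\le n-1$) satisfy $L_i=\hat a_{i,i-1}R_{i-1}+\hat b_{i,i-1}$ for $2\le i\le n$, and $L_i\le R_i$ for $2\le i\le n-1$. Suppose $\prod_{i=1}^{j}\hat a_{n-(i-1),n-i}=\hat a_{n,n-j}\le 1$ for all $1\le j\le n-1$. Then for every $1\le j\le n-1$, $$\sum_{i=1}^{j}\bigl(L_{n-(i-1)}-R_{n-i}\bigr)\le(\hat a_{n,n-j}-1)\,R_{n-j}+\hat b_{n,n-1}+\sum_{i=n-j+1}^{n-1}\hat a_{n,i}\,\hat b_{i,i-1}.$$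
   Context: Setting: a timing packet traverses a chain of nodes $1,\ldots,n$; $L_i=\tau^{i,l}(t_{i,l})$ is the receive time-stamp of node $i$ and $R_i=\tau^{i,r}(t_{i,r})$ the send time-stamp of node $i$, generated by arbitrary "left" and "right" clocks. $\hat a_{i,i-1},\hat b_{i,i-1}$ are declared relative skews and offsets; $L_i=\hat a_{i,i-1}R_{i-1}+\hat b_{i,i-1}$ is the skew-consistency condition and $L_i\le R_i$ is causality. *)

theory Defs
  imports Main "HOL.Real"
begin

definition ahat :: "(nat \<Rightarrow> real) \<Rightarrow> nat \<Rightarrow> nat \<Rightarrow> real" where
  "ahat a k m = (\<Prod>i\<in>{m+1..k}. a i)"

end

theory Submission
  imports Defs
begin

text \<open>Read from the last node backwards, the offset sum telescopes. Each hop contributes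
  L (m+1) - R m, and the remainder (A - 1) * R (m+1), with A = ahat a n (m+1) \<le> 1, is pushed one
  node down: causality bounds it by (A - 1) * L (m+1), and the skew relation turns A * L (m+1)
  into ahat a n m * R m + A * b (m+1).\<close>

lemma ahat_self [simp]: "ahat a k k = 1"
  by (simp add: ahat_def)

lemma ahat_Suc_lower: "m < k \<Longrightarrow> ahat a k m = a (Suc m) * ahat a k (Suc m)"
  unfolding ahat_def by (simp add: prod.atLeast_Suc_atMost)

lemma sum_reflect_atLeastAtMost:
  fixes f :: "nat \<Rightarrow> 'b::comm_monoid_add"
  assumes "j \<le> n"
  shows "(\<Sum>i=1..j. f (n - (i - 1))) = (\<Sum>i=n-j+1..n. f i)"
  by (rule sum.reindex_bij_witness[where i = "\<lambda>i. n + 1 - i" and j = "\<lambda>i. n + 1 - i"])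
    (use assms in auto)

lemma offset_sum_le:
  fixes a b L R :: "nat \<Rightarrow> real"
  assumes "k \<le> n"
    and skew: "\<And>i. k < i \<Longrightarrow> i \<le> n \<Longrightarrow> L i = a i * R (i - 1) + b i"
    and causal: "\<And>i. k < i \<Longrightarrow> i < n \<Longrightarrow> L i \<le> R i"
    and ahat_le: "\<And>i. k < i \<Longrightarrow> i < n \<Longrightarrow> ahat a n i \<le> 1"
  shows "(\<Sum>i=k+1..n. L i - R (i - 1))
           \<le> (ahat a n k - 1) * R k + (\<Sum>i=k+1..n. ahat a n i * b i)"
  using \<open>k \<le> n\<close>
proof (induction k rule: inc_induct)
  case base
  then show ?case by simp
next
  case (step m)
  let ?A = "ahat a n (Suc m)"
  have remainder: "(?A - 1) * R (Suc m) \<le> (?A - 1) * L (Suc m)"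
  proof (cases "Suc m = n")
    case False
    with step.hyps have "?A \<le> 1" "L (Suc m) \<le> R (Suc m)"
      using ahat_le causal by auto
    then show ?thesis by (simp add: mult_left_mono_neg)
  qed simp
  have "(\<Sum>i=m+1..n. L i - R (i - 1))
        = (L (Suc m) - R m) + (\<Sum>i=Suc m+1..n. L i - R (i - 1))"
    using step.hyps by (simp add: sum.atLeast_Suc_atMost)
  also have "\<dots> \<le> (L (Suc m) - R m) + (?A - 1) * R (Suc m) + (\<Sum>i=Suc m+1..n. ahat a n i * b i)"
    using step.IH by simp
  also have "\<dots> \<le> (L (Suc m) - R m) + (?A - 1) * L (Suc m) + (\<Sum>i=Suc m+1..n. ahat a n i * b i)"
    using remainder by simp
  also have "\<dots> = (a (Suc m) * ?A - 1) * R m + ?A * b (Suc m) + (\<Sum>i=Suc m+1..n. ahat a n i * b i)"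
    using skew[of "Suc m"] step.hyps by (simp add: algebra_simps)
  also have "\<dots> = (ahat a n m - 1) * R m + (\<Sum>i=m+1..n. ahat a n i * b i)"
    using step.hyps by (simp add: ahat_Suc_lower sum.atLeast_Suc_atMost)
  finally show ?case .
qed

theorem lemma2:
  fixes n :: nat and a b L R :: "nat \<Rightarrow> real"
  assumes n2: "n \<ge> 2"
    and apos: "\<And>i. 2 \<le> i \<Longrightarrow> i \<le> n \<Longrightarrow> a i > 0"
    and skew: "\<And>i. 2 \<le> i \<Longrightarrow> i \<le> n \<Longrightarrow> L i = a i * R (i - 1) + b i"
    and causal: "\<And>i. 2 \<le> i \<Longrightarrow> i \<le> n - 1 \<Longrightarrow> L i \<le> R i"
    and prod_le: "\<And>j. 1 \<le> j \<Longrightarrow> j \<le> n - 1 \<Longrightarrow>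
         (\<Prod>i=1..j. a (n - (i - 1))) = ahat a n (n - j) \<and> ahat a n (n - j) \<le> 1"
  shows "\<forall>j. 1 \<le> j \<and> j \<le> n - 1 \<longrightarrow>
     (\<Sum>i=1..j. L (n - (i - 1)) - R (n - i))
       \<le> (ahat a n (n - j) - 1) * R (n - j) + b n
          + (\<Sum>i=n-j+1..n-1. ahat a n i * b i)"
proof (intro allI impI)
  fix j assume j: "1 \<le> j \<and> j \<le> n - 1"
  have ahat_le: "ahat a n i \<le> 1" if "n - j < i" "i < n" for i
    using prod_le[of "n - i"] that by auto
  have "(\<Sum>i=n-j+1..n. L i - R (i - 1))
        \<le> (ahat a n (n - j) - 1) * R (n - j) + (\<Sum>i=n-j+1..n. ahat a n i * b i)"
    by (rule offset_sum_le) (use j skew causal ahat_le in auto)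
  moreover have "(\<Sum>i=1..j. L (n - (i - 1)) - R (n - i)) = (\<Sum>i=n-j+1..n. L i - R (i - 1))"
    using sum_reflect_atLeastAtMost[of j n "\<lambda>i. L i - R (i - 1)"] j by force
  moreover have "(\<Sum>i=n-j+1..n. ahat a n i * b i) = b n + (\<Sum>i=n-j+1..n-1. ahat a n i * b i)"
    using j n2 sum.cl_ivl_Suc[of "\<lambda>i. ahat a n i * b i" "n - j + 1" "n - 1"] by auto
  ultimately show "(\<Sum>i=1..j. L (n - (i - 1)) - R (n - i))
       \<le> (ahat a n (n - j) - 1) * R (n - j) + b n + (\<Sum>i=n-j+1..n-1. ahat a n i * b i)"
    by simp
qed

end
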